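(* Let $(A,*,\circ)$ be a left skew brace and $I,J$ ideals of $A$. Then the Huq commutator $[I,J]$ is the ideal of $A$ generated by the union of the following three sets: (1) $\{\,i\circ j\circ(j\circ i)^{-\circ}\mid i\in I,\ j\in J\,\}$; (2) $\{\,i*j*(j*i)^{-*}\mid i\in I,\ j\in J\,\}$; (3) $\{\,(i\circ j)*(i*j)^{-*}\mid i\in I,\ j\in J\,\}$.
   Context: A (left) skew brace is a triple $(A,*,\circ)$ with $(A,* )$ and $(A,\circ)$ groups such that $a\circ(b*c)=(a\circ b)*a^{-*}*(a\circ c)$ for all $a,b,c\in A$; $a^{-*}$, $a^{-\circ}$ denote inverses in $(A,* )$, $(A,\circ)$; the groups share the identity. Morphisms are maps that are homomorphisms for both operations; products are componentwise. For $a,u\in A$, $\lambda_a(u)=a^{-*}*(a\circ u)$. An ideal of $A$ is a subset $I$ that is a normal subgroup of $(A,\circ)$, satisfies $I*a=a*I$ for all $a\in A$, and $\lambda_a(I)\subseteq I$ for all $a\in A$; ideals are sub-skew braces and for an ideal $K$ the cosets $a*K=a\circ K$ form the quotient skew brace $A/K$. The Huq commutator $[I,J]$ of ideals $I,J$ is the smallest ideal $K$ of $A$ such that the map $I\times J\to A/K$, $(i,j)\mapsto (i*j)*K$, is a skew brace morphism (equivalently, the kernel of the universal surjective morphism $\psi\colon A\to Q$ such that there is a skew brace morphism $\varphi\colon \psi(I)\times\psi(J)\to Q$ with $\varphi(x,1)=x$, $\varphi(1,y)=y$). *)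

theory Defs
  imports "HOL-Algebra.Algebra"
begin

text \<open>A skew brace is given by two HOL-Algebra monoid structures S (the additive
  group (A,*)) and C (the multiplicative group (A,o)) on the same carrier.\<close>

definition skew_brace :: "'a monoid \<Rightarrow> 'a monoid \<Rightarrow> bool" where
  "skew_brace S C \<longleftrightarrow> group S \<and> group C \<and> carrier C = carrier S \<and>
     (\<forall>a\<in>carrier S. \<forall>b\<in>carrier S. \<forall>c\<in>carrier S.
        a \<otimes>\<^bsub>C\<^esub> (b \<otimes>\<^bsub>S\<^esub> c) =
        (a \<otimes>\<^bsub>C\<^esub> b) \<otimes>\<^bsub>S\<^esub> inv\<^bsub>S\<^esub> a \<otimes>\<^bsub>S\<^esub> (a \<otimes>\<^bsub>C\<^esub> c))"

definition brace_lambda :: "'a monoid \<Rightarrow> 'a monoid \<Rightarrow> 'a \<Rightarrow> 'a \<Rightarrow> 'a" where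
  "brace_lambda S C a u = inv\<^bsub>S\<^esub> a \<otimes>\<^bsub>S\<^esub> (a \<otimes>\<^bsub>C\<^esub> u)"

definition brace_ideal :: "'a monoid \<Rightarrow> 'a monoid \<Rightarrow> 'a set \<Rightarrow> bool" where
  "brace_ideal S C I \<longleftrightarrow> I \<subseteq> carrier S \<and> I \<lhd> C \<and>
     (\<forall>a\<in>carrier S. I #>\<^bsub>S\<^esub> a = a <#\<^bsub>S\<^esub> I) \<and>
     (\<forall>a\<in>carrier S. brace_lambda S C a ` I \<subseteq> I)"

definition brace_hom :: "('a, 'm) monoid_scheme \<Rightarrow> ('a, 'm) monoid_scheme \<Rightarrow>
     ('b, 'n) monoid_scheme \<Rightarrow> ('b, 'n) monoid_scheme \<Rightarrow> ('a \<Rightarrow> 'b) set" where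
  "brace_hom S C S' C' = hom S S' \<inter> hom C C'"

text \<open>The condition in the definition of the Huq commutator: the map
  I x J -> A/K, (i,j) |-> (i*j)K, is a skew brace morphism from the product
  of the sub-skew braces I and J to the quotient skew brace A/K.
  (Cosets are written as right cosets K*a, equal to a*K for an ideal K.)\<close>
definition huq_condition :: "'a monoid \<Rightarrow> 'a monoid \<Rightarrow> 'a set \<Rightarrow> 'a set \<Rightarrow> 'a set \<Rightarrow> bool" where
  "huq_condition S C I J K \<longleftrightarrow>
     (\<lambda>(i, j). K #>\<^bsub>S\<^esub> (i \<otimes>\<^bsub>S\<^esub> j)) \<in>
       brace_hom (S\<lparr>carrier := I\<rparr> \<times>\<times> S\<lparr>carrier := J\<rparr>)
                 (C\<lparr>carrier := I\<rparr> \<times>\<times> C\<lparr>carrier := J\<rparr>)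
                 (S Mod K) (C Mod K)"

definition huq_commutator :: "'a monoid \<Rightarrow> 'a monoid \<Rightarrow> 'a set \<Rightarrow> 'a set \<Rightarrow> 'a set" where
  "huq_commutator S C I J = (THE K. brace_ideal S C K \<and> huq_condition S C I J K \<and>
      (\<forall>K'. brace_ideal S C K' \<and> huq_condition S C I J K' \<longrightarrow> K \<subseteq> K'))"

definition brace_ideal_generated :: "'a monoid \<Rightarrow> 'a monoid \<Rightarrow> 'a set \<Rightarrow> 'a set" where
  "brace_ideal_generated S C Y = Inter {L. brace_ideal S C L \<and> Y \<subseteq> L}"

end

theory Submission
  imports Defs
begin

(* For an ideal K write [x] for the class of x in A/K. Evaluating the morphism conditions for
   (i,j) |-> [i*j] at pairs with a trivial coordinate shows that [i] and [j] commute for both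
   operations and that [i o j] = [i*j]. Conversely these relations give
   [i*i'*j*j'] = [i*j*i'*j'] and
   [(i o i')*(j o j')] = [(i o i') o (j o j')] = [(i o j) o (i' o j')] = [(i*j) o (i'*j')].
   Hence K satisfies the Huq condition iff it contains the three families of generators, and
   the least such ideal is the ideal they generate. *)

lemma (in group) normal_Inter:
  assumes "F \<noteq> {}" and "\<And>N. N \<in> F \<Longrightarrow> N \<lhd> G"
  shows "\<Inter>F \<lhd> G"
proof (rule normal_invI)
  show "subgroup (\<Inter>F) G"
    using assms by (intro subgroups_Inter) (auto intro: normal_imp_subgroup)
  show "x \<otimes> h \<otimes> inv x \<in> \<Inter>F" if "x \<in> carrier G" and "h \<in> \<Inter>F" for x h
    using assms(2) that normal_invE(2) by blast
qed

lemma (in group) m_inv_cancel_left [simp]: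
  "\<lbrakk>x \<in> carrier G; y \<in> carrier G\<rbrakk> \<Longrightarrow> x \<otimes> (inv x \<otimes> y) = y"
  by (simp flip: m_assoc)

lemma (in group) rcos_eq_iff:
  assumes H: "subgroup H G" and x: "x \<in> carrier G" and y: "y \<in> carrier G"
  shows "H #> x = H #> y \<longleftrightarrow> x \<otimes> inv y \<in> H"
proof
  assume "H #> x = H #> y"
  then have "x \<in> H #> y"
    using repr_independenceD[OF H x] by simp
  then show "x \<otimes> inv y \<in> H"
    by (rule subgroup.rcos_module_imp[OF H is_group y])
next
  assume "x \<otimes> inv y \<in> H"
  then have "x \<in> H #> y"
    by (rule subgroup.rcos_module_rev[OF H is_group y x])
  then show "H #> x = H #> y"
    using repr_independence[OF _ y H] by simp
qed

lemma (in normal) rcos_mult_cong: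
  assumes "H #> x = H #> x'" and "H #> y = H #> y'"
    and "x \<in> carrier G" "y \<in> carrier G" "x' \<in> carrier G" "y' \<in> carrier G"
  shows "H #> (x \<otimes> y) = H #> (x' \<otimes> y')"
  using assms rcos_sum by metis

lemma (in normal) rcos_interchange:
  assumes "H #> (x' \<otimes> y) = H #> (y \<otimes> x')"
    and "x \<in> carrier G" "y \<in> carrier G" "x' \<in> carrier G" "y' \<in> carrier G"
  shows "H #> (x \<otimes> x' \<otimes> (y \<otimes> y')) = H #> (x \<otimes> y \<otimes> (x' \<otimes> y'))"
proof -
  have "H #> (x \<otimes> ((x' \<otimes> y) \<otimes> y')) = H #> (x \<otimes> ((y \<otimes> x') \<otimes> y'))"
    using assms by (intro rcos_mult_cong[OF refl rcos_mult_cong[OF _ refl]]) simp_all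
  then show ?thesis
    using assms by (simp add: m_assoc)
qed

locale left_skew_brace = S: group S + C: group C for S C :: "'a monoid" +
  assumes carrier_C [simp]: "carrier C = carrier S"
    and brace_law: "\<And>a b c. \<lbrakk>a \<in> carrier S; b \<in> carrier S; c \<in> carrier S\<rbrakk> \<Longrightarrow>
      a \<otimes>\<^bsub>C\<^esub> (b \<otimes>\<^bsub>S\<^esub> c) = (a \<otimes>\<^bsub>C\<^esub> b) \<otimes>\<^bsub>S\<^esub> inv\<^bsub>S\<^esub> a \<otimes>\<^bsub>S\<^esub> (a \<otimes>\<^bsub>C\<^esub> c)"

lemma left_skew_braceI: "skew_brace S C \<Longrightarrow> left_skew_brace S C"
  unfolding skew_brace_def left_skew_brace_def left_skew_brace_axioms_def by blast

context left_skew_brace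
begin

lemma m_closed_C [simp]: "\<lbrakk>a \<in> carrier S; b \<in> carrier S\<rbrakk> \<Longrightarrow> a \<otimes>\<^bsub>C\<^esub> b \<in> carrier S"
  using C.m_closed by simp

lemma inv_closed_C [simp]: "a \<in> carrier S \<Longrightarrow> inv\<^bsub>C\<^esub> a \<in> carrier S"
  using C.inv_closed by simp

lemma one_C [simp]: "\<one>\<^bsub>C\<^esub> = \<one>\<^bsub>S\<^esub>"
proof -
  have one_C_closed: "\<one>\<^bsub>C\<^esub> \<in> carrier S"
    using C.one_closed by simp
  have "\<one>\<^bsub>S\<^esub> = \<one>\<^bsub>C\<^esub> \<otimes>\<^bsub>C\<^esub> (\<one>\<^bsub>S\<^esub> \<otimes>\<^bsub>S\<^esub> \<one>\<^bsub>S\<^esub>)"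
    by simp
  also have "\<dots> = inv\<^bsub>S\<^esub> \<one>\<^bsub>C\<^esub>"
    using brace_law[OF one_C_closed S.one_closed S.one_closed] one_C_closed by simp
  finally show ?thesis
    using one_C_closed S.inv_eq_1_iff by metis
qed

lemma l_one_C [simp]: "a \<in> carrier S \<Longrightarrow> \<one>\<^bsub>S\<^esub> \<otimes>\<^bsub>C\<^esub> a = a"
  using C.l_one by simp

lemma r_one_C [simp]: "a \<in> carrier S \<Longrightarrow> a \<otimes>\<^bsub>C\<^esub> \<one>\<^bsub>S\<^esub> = a"
  using C.r_one by simp

lemma r_inv_C [simp]: "a \<in> carrier S \<Longrightarrow> a \<otimes>\<^bsub>C\<^esub> inv\<^bsub>C\<^esub> a = \<one>\<^bsub>S\<^esub>"
  using C.r_inv by simp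

lemma m_assoc_C: "\<lbrakk>a \<in> carrier S; b \<in> carrier S; c \<in> carrier S\<rbrakk> \<Longrightarrow>
    a \<otimes>\<^bsub>C\<^esub> b \<otimes>\<^bsub>C\<^esub> c = a \<otimes>\<^bsub>C\<^esub> (b \<otimes>\<^bsub>C\<^esub> c)"
  using C.m_assoc by simp

abbreviation lam :: "'a \<Rightarrow> 'a \<Rightarrow> 'a" where
  "lam \<equiv> brace_lambda S C"

lemma lambda_closed [simp]: "\<lbrakk>a \<in> carrier S; u \<in> carrier S\<rbrakk> \<Longrightarrow> lam a u \<in> carrier S"
  by (simp add: brace_lambda_def)

lemma mult_lambda: "\<lbrakk>a \<in> carrier S; u \<in> carrier S\<rbrakk> \<Longrightarrow> a \<otimes>\<^bsub>S\<^esub> lam a u = a \<otimes>\<^bsub>C\<^esub> u"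
  by (simp add: brace_lambda_def)

lemma lambda_inv_C: "a \<in> carrier S \<Longrightarrow> lam a (inv\<^bsub>C\<^esub> a) = inv\<^bsub>S\<^esub> a"
  by (simp add: brace_lambda_def)

lemma lambda_hom: "a \<in> carrier S \<Longrightarrow> lam a \<in> hom S S"
  by (rule homI) (simp_all add: brace_lambda_def brace_law S.m_assoc)

lemma lambda_comp:
  assumes a: "a \<in> carrier S" and b: "b \<in> carrier S" and u: "u \<in> carrier S"
  shows "lam a (lam b u) = lam (a \<otimes>\<^bsub>C\<^esub> b) u"
proof -
  interpret lam_a: group_hom S S "lam a"
    using lambda_hom[OF a] by (unfold_locales) simp
  have "lam a (lam b u) = lam a (inv\<^bsub>S\<^esub> b) \<otimes>\<^bsub>S\<^esub> lam a (b \<otimes>\<^bsub>C\<^esub> u)"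
    using b u by (simp add: brace_lambda_def[of S C b])
  also have "\<dots> = inv\<^bsub>S\<^esub> (lam a b) \<otimes>\<^bsub>S\<^esub> lam a (b \<otimes>\<^bsub>C\<^esub> u)"
    using b by simp
  also have "\<dots> = lam (a \<otimes>\<^bsub>C\<^esub> b) u"
    using a b u by (simp add: brace_lambda_def S.inv_mult_group S.m_assoc m_assoc_C)
  finally show ?thesis .
qed

lemma lambda_lambda_inv_C: "\<lbrakk>a \<in> carrier S; u \<in> carrier S\<rbrakk> \<Longrightarrow> lam a (lam (inv\<^bsub>C\<^esub> a) u) = u"
  using lambda_comp[of a "inv\<^bsub>C\<^esub> a" u] by (simp add: brace_lambda_def)

lemma brace_ideal_subgroup_C: "brace_ideal S C K \<Longrightarrow> subgroup K C"
  unfolding brace_ideal_def using normal_imp_subgroup by blast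

lemma brace_ideal_subgroup_S:
  assumes K: "brace_ideal S C K"
  shows "subgroup K S"
proof (rule S.subgroupI)
  have sub: "K \<subseteq> carrier S" and sub_C: "subgroup K C"
    using K normal_imp_subgroup by (auto simp: brace_ideal_def)
  have lam_K: "\<And>a u. \<lbrakk>a \<in> carrier S; u \<in> K\<rbrakk> \<Longrightarrow> lam a u \<in> K"
    using K unfolding brace_ideal_def by blast
  show "K \<subseteq> carrier S" by fact
  show "K \<noteq> {}"
    using subgroup.one_closed[OF sub_C] by blast
  fix a assume a: "a \<in> K"
  then have a_carrier: "a \<in> carrier S"
    using sub by blast
  show "inv\<^bsub>S\<^esub> a \<in> K"
    using lam_K[OF a_carrier subgroup.m_inv_closed[OF sub_C a]] lambda_inv_C[OF a_carrier] by simp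
  fix b assume b: "b \<in> K"
  then have b_carrier: "b \<in> carrier S"
    using sub by blast
  have "a \<otimes>\<^bsub>S\<^esub> b = a \<otimes>\<^bsub>S\<^esub> lam a (lam (inv\<^bsub>C\<^esub> a) b)"
    using lambda_lambda_inv_C[OF a_carrier b_carrier] by simp
  also have "\<dots> = a \<otimes>\<^bsub>C\<^esub> lam (inv\<^bsub>C\<^esub> a) b"
    using a_carrier b_carrier by (simp add: mult_lambda)
  also have "\<dots> \<in> K"
    using lam_K[OF inv_closed_C[OF a_carrier] b] by (rule subgroup.m_closed[OF sub_C a])
  finally show "a \<otimes>\<^bsub>S\<^esub> b \<in> K" .
qed

lemma brace_ideal_iff:
  "brace_ideal S C K \<longleftrightarrow>
    K \<subseteq> carrier S \<and> K \<lhd> C \<and> K \<lhd> S \<and> (\<forall>a\<in>carrier S. \<forall>u\<in>K. lam a u \<in> K)"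
  using S.normalI[OF brace_ideal_subgroup_S] normal.coset_eq
  unfolding brace_ideal_def by fastforce

lemma brace_ideal_Inter:
  assumes "F \<noteq> {}" and "\<And>K. K \<in> F \<Longrightarrow> brace_ideal S C K"
  shows "brace_ideal S C (\<Inter>F)"
proof -
  have ideals: "\<And>K. K \<in> F \<Longrightarrow>
      K \<subseteq> carrier S \<and> K \<lhd> C \<and> K \<lhd> S \<and> (\<forall>a\<in>carrier S. \<forall>u\<in>K. lam a u \<in> K)"
    using assms(2) brace_ideal_iff by blast
  show ?thesis
    unfolding brace_ideal_iff
  proof (intro conjI ballI)
    show "\<Inter>F \<subseteq> carrier S"
      using assms(1) ideals by blast
    show "\<Inter>F \<lhd> C"
      using assms(1) ideals by (intro C.normal_Inter) auto
    show "\<Inter>F \<lhd> S"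
      using assms(1) ideals by (intro S.normal_Inter) auto
    show "lam a u \<in> \<Inter>F" if "a \<in> carrier S" and "u \<in> \<Inter>F" for a u
      using that ideals by blast
  qed
qed

lemma brace_ideal_carrier: "brace_ideal S C (carrier S)"
proof -
  have "carrier S \<lhd> S"
    by (rule S.normal_invI[OF S.subgroup_self]) simp
  moreover have "carrier S \<lhd> C"
    using C.normal_invI[OF C.subgroup_self] by simp
  ultimately show ?thesis
    unfolding brace_ideal_iff by (blast intro: lambda_closed)
qed

lemma brace_ideal_generated:
  assumes "Y \<subseteq> carrier S"
  shows "brace_ideal S C (brace_ideal_generated S C Y)"
  unfolding brace_ideal_generated_def
  using assms brace_ideal_carrier by (intro brace_ideal_Inter) auto

lemma the_least_brace_ideal_containing:
  assumes "Y \<subseteq> carrier S"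
  shows "(THE K. brace_ideal S C K \<and> Y \<subseteq> K \<and>
      (\<forall>K'. brace_ideal S C K' \<and> Y \<subseteq> K' \<longrightarrow> K \<subseteq> K')) = brace_ideal_generated S C Y"
proof (rule the_equality)
  show "brace_ideal S C (brace_ideal_generated S C Y) \<and> Y \<subseteq> brace_ideal_generated S C Y \<and>
      (\<forall>K'. brace_ideal S C K' \<and> Y \<subseteq> K' \<longrightarrow> brace_ideal_generated S C Y \<subseteq> K')"
    using brace_ideal_generated[OF assms] unfolding brace_ideal_generated_def by blast
  then show "K = brace_ideal_generated S C Y"
    if "brace_ideal S C K \<and> Y \<subseteq> K \<and> (\<forall>K'. brace_ideal S C K' \<and> Y \<subseteq> K' \<longrightarrow> K \<subseteq> K')" for K
    using that by blast
qed

lemma l_coset_S_eq_C: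
  assumes K: "brace_ideal S C K" and x: "x \<in> carrier S"
  shows "x <#\<^bsub>S\<^esub> K = x <#\<^bsub>C\<^esub> K"
proof -
  have sub: "K \<subseteq> carrier S" and lam_K: "\<And>a u. \<lbrakk>a \<in> carrier S; u \<in> K\<rbrakk> \<Longrightarrow> lam a u \<in> K"
    using K unfolding brace_ideal_iff by blast+
  have "x \<otimes>\<^bsub>S\<^esub> k \<in> x <#\<^bsub>C\<^esub> K" if k: "k \<in> K" for k
  proof -
    have "x \<otimes>\<^bsub>S\<^esub> k = x \<otimes>\<^bsub>C\<^esub> lam (inv\<^bsub>C\<^esub> x) k"
      using x k sub lambda_lambda_inv_C[of x k] mult_lambda[of x "lam (inv\<^bsub>C\<^esub> x) k"] by auto
    then show ?thesis
      using lam_K[OF inv_closed_C[OF x] k] by (auto simp: l_coset_def)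
  qed
  moreover have "x \<otimes>\<^bsub>C\<^esub> k \<in> x <#\<^bsub>S\<^esub> K" if k: "k \<in> K" for k
  proof -
    have "x \<otimes>\<^bsub>C\<^esub> k = x \<otimes>\<^bsub>S\<^esub> lam x k"
      using x k sub mult_lambda[of x k] by auto
    then show ?thesis
      using lam_K[OF x k] by (auto simp: l_coset_def)
  qed
  ultimately show ?thesis
    by (auto simp: l_coset_def)
qed

lemma r_coset_S_eq_C:
  assumes K: "brace_ideal S C K" and x: "x \<in> carrier S"
  shows "K #>\<^bsub>S\<^esub> x = K #>\<^bsub>C\<^esub> x"
proof -
  have "K #>\<^bsub>S\<^esub> x = x <#\<^bsub>S\<^esub> K"
    using K x by (auto simp: brace_ideal_def)
  also have "\<dots> = x <#\<^bsub>C\<^esub> K"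
    by (rule l_coset_S_eq_C[OF K x])
  also have "\<dots> = K #>\<^bsub>C\<^esub> x"
    using K x normal.coset_eq[of K C] by (auto simp: brace_ideal_def)
  finally show ?thesis .
qed

lemma rcos_mult_cong_C:
  assumes K: "brace_ideal S C K"
    and "K #>\<^bsub>S\<^esub> x = K #>\<^bsub>S\<^esub> x'" and "K #>\<^bsub>S\<^esub> y = K #>\<^bsub>S\<^esub> y'"
    and "x \<in> carrier S" "y \<in> carrier S" "x' \<in> carrier S" "y' \<in> carrier S"
  shows "K #>\<^bsub>S\<^esub> (x \<otimes>\<^bsub>C\<^esub> y) = K #>\<^bsub>S\<^esub> (x' \<otimes>\<^bsub>C\<^esub> y')"
  using assms normal.rcos_mult_cong[of K C x x' y y'] r_coset_S_eq_C[OF K]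
  by (simp add: brace_ideal_def)

lemma rcos_eq_iff_C:
  assumes K: "brace_ideal S C K" and "x \<in> carrier S" and "y \<in> carrier S"
  shows "K #>\<^bsub>S\<^esub> x = K #>\<^bsub>S\<^esub> y \<longleftrightarrow> x \<otimes>\<^bsub>C\<^esub> inv\<^bsub>C\<^esub> y \<in> K"
  using assms C.rcos_eq_iff[OF brace_ideal_subgroup_C[OF K]] r_coset_S_eq_C[OF K] by simp

lemma rcos_eq_iff_S:
  assumes K: "brace_ideal S C K" and "x \<in> carrier S" and "y \<in> carrier S"
  shows "K #>\<^bsub>S\<^esub> x = K #>\<^bsub>S\<^esub> y \<longleftrightarrow> x \<otimes>\<^bsub>S\<^esub> inv\<^bsub>S\<^esub> y \<in> K"
  using assms S.rcos_eq_iff[OF brace_ideal_subgroup_S[OF K]] by simp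

lemma huq_condition_iff_rcos:
  assumes K: "brace_ideal S C K" and I: "I \<subseteq> carrier S" and J: "J \<subseteq> carrier S"
  shows "huq_condition S C I J K \<longleftrightarrow> (\<forall>i\<in>I. \<forall>j\<in>J. \<forall>i'\<in>I. \<forall>j'\<in>J.
      K #>\<^bsub>S\<^esub> (i \<otimes>\<^bsub>S\<^esub> i' \<otimes>\<^bsub>S\<^esub> (j \<otimes>\<^bsub>S\<^esub> j')) = K #>\<^bsub>S\<^esub> (i \<otimes>\<^bsub>S\<^esub> j \<otimes>\<^bsub>S\<^esub> (i' \<otimes>\<^bsub>S\<^esub> j')) \<and>
      K #>\<^bsub>S\<^esub> ((i \<otimes>\<^bsub>C\<^esub> i') \<otimes>\<^bsub>S\<^esub> (j \<otimes>\<^bsub>C\<^esub> j')) = K #>\<^bsub>S\<^esub> ((i \<otimes>\<^bsub>S\<^esub> j) \<otimes>\<^bsub>C\<^esub> (i' \<otimes>\<^bsub>S\<^esub> j')))"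
proof -
  have normal_S: "K \<lhd> S" and normal_C: "K \<lhd> C"
    using K brace_ideal_iff by blast+
  have "K #>\<^bsub>S\<^esub> (i \<otimes>\<^bsub>S\<^esub> j) \<in> carrier (S Mod K) \<inter> carrier (C Mod K)" if "i \<in> I" "j \<in> J" for i j
  proof -
    have ij: "i \<otimes>\<^bsub>S\<^esub> j \<in> carrier S"
      using that I J by blast
    then show ?thesis
      using r_coset_S_eq_C[OF K ij] by (auto simp: carrier_FactGroup)
  qed
  then show ?thesis
    unfolding huq_condition_def brace_hom_def hom_def
    using I J normal.rcos_sum[OF normal_S] normal.rcos_sum[OF normal_C] r_coset_S_eq_C[OF K]
    by (auto simp: subset_iff)
qed

lemma huq_condition_commute:
  assumes K: "brace_ideal S C K" and I: "subgroup I C" and J: "subgroup J C"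
    and huq: "huq_condition S C I J K" and i: "i \<in> I" and j: "j \<in> J"
  shows "K #>\<^bsub>S\<^esub> (i \<otimes>\<^bsub>C\<^esub> j) = K #>\<^bsub>S\<^esub> (j \<otimes>\<^bsub>C\<^esub> i)"
    and "K #>\<^bsub>S\<^esub> (i \<otimes>\<^bsub>S\<^esub> j) = K #>\<^bsub>S\<^esub> (j \<otimes>\<^bsub>S\<^esub> i)"
    and "K #>\<^bsub>S\<^esub> (i \<otimes>\<^bsub>C\<^esub> j) = K #>\<^bsub>S\<^esub> (i \<otimes>\<^bsub>S\<^esub> j)"
proof -
  have I_carrier: "I \<subseteq> carrier S" and J_carrier: "J \<subseteq> carrier S"
    using subgroup.subset[OF I] subgroup.subset[OF J] by simp_all
  have one_I: "\<one>\<^bsub>S\<^esub> \<in> I" and one_J: "\<one>\<^bsub>S\<^esub> \<in> J"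
    using subgroup.one_closed[OF I] subgroup.one_closed[OF J] by simp_all
  note hom = huq[unfolded huq_condition_iff_rcos[OF K I_carrier J_carrier], rule_format]
  have ij: "i \<in> carrier S" "j \<in> carrier S"
    using i j I_carrier J_carrier by blast+
  have S_comm: "K #>\<^bsub>S\<^esub> (i \<otimes>\<^bsub>S\<^esub> j) = K #>\<^bsub>S\<^esub> (j \<otimes>\<^bsub>S\<^esub> i)"
    and S_C: "K #>\<^bsub>S\<^esub> (i \<otimes>\<^bsub>S\<^esub> j) = K #>\<^bsub>S\<^esub> (j \<otimes>\<^bsub>C\<^esub> i)"
    using hom[OF one_I j i one_J] ij by auto
  have C_S: "K #>\<^bsub>S\<^esub> (i \<otimes>\<^bsub>C\<^esub> j) = K #>\<^bsub>S\<^esub> (i \<otimes>\<^bsub>S\<^esub> j)"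
    using hom[OF i one_J one_I j] ij by simp
  show "K #>\<^bsub>S\<^esub> (i \<otimes>\<^bsub>C\<^esub> j) = K #>\<^bsub>S\<^esub> (j \<otimes>\<^bsub>C\<^esub> i)"
    using C_S S_C by simp
  show "K #>\<^bsub>S\<^esub> (i \<otimes>\<^bsub>S\<^esub> j) = K #>\<^bsub>S\<^esub> (j \<otimes>\<^bsub>S\<^esub> i)"
    by (rule S_comm)
  show "K #>\<^bsub>S\<^esub> (i \<otimes>\<^bsub>C\<^esub> j) = K #>\<^bsub>S\<^esub> (i \<otimes>\<^bsub>S\<^esub> j)"
    by (rule C_S)
qed

lemma huq_conditionI:
  assumes K: "brace_ideal S C K" and I: "subgroup I C" and J: "subgroup J C"
    and comm_C: "\<And>i j. \<lbrakk>i \<in> I; j \<in> J\<rbrakk> \<Longrightarrow> K #>\<^bsub>S\<^esub> (i \<otimes>\<^bsub>C\<^esub> j) = K #>\<^bsub>S\<^esub> (j \<otimes>\<^bsub>C\<^esub> i)"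
    and comm_S: "\<And>i j. \<lbrakk>i \<in> I; j \<in> J\<rbrakk> \<Longrightarrow> K #>\<^bsub>S\<^esub> (i \<otimes>\<^bsub>S\<^esub> j) = K #>\<^bsub>S\<^esub> (j \<otimes>\<^bsub>S\<^esub> i)"
    and C_eq_S: "\<And>i j. \<lbrakk>i \<in> I; j \<in> J\<rbrakk> \<Longrightarrow> K #>\<^bsub>S\<^esub> (i \<otimes>\<^bsub>C\<^esub> j) = K #>\<^bsub>S\<^esub> (i \<otimes>\<^bsub>S\<^esub> j)"
  shows "huq_condition S C I J K"
proof -
  have I_carrier: "I \<subseteq> carrier S" and J_carrier: "J \<subseteq> carrier S"
    using subgroup.subset[OF I] subgroup.subset[OF J] by simp_all
  have normal_S: "K \<lhd> S" and normal_C: "K \<lhd> C"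
    using K brace_ideal_iff by blast+
  show ?thesis
    unfolding huq_condition_iff_rcos[OF K I_carrier J_carrier]
  proof (intro ballI conjI)
    fix i j i' j' assume i: "i \<in> I" and j: "j \<in> J" and i': "i' \<in> I" and j': "j' \<in> J"
    have ii': "i \<otimes>\<^bsub>C\<^esub> i' \<in> I" and jj': "j \<otimes>\<^bsub>C\<^esub> j' \<in> J"
      using subgroup.m_closed[OF I i i'] subgroup.m_closed[OF J j j'] .
    note [simp] = subsetD[OF I_carrier i] subsetD[OF J_carrier j]
      subsetD[OF I_carrier i'] subsetD[OF J_carrier j'] r_coset_S_eq_C[OF K]
    show "K #>\<^bsub>S\<^esub> (i \<otimes>\<^bsub>S\<^esub> i' \<otimes>\<^bsub>S\<^esub> (j \<otimes>\<^bsub>S\<^esub> j')) = K #>\<^bsub>S\<^esub> (i \<otimes>\<^bsub>S\<^esub> j \<otimes>\<^bsub>S\<^esub> (i' \<otimes>\<^bsub>S\<^esub> j'))"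
      using comm_S[OF i' j] by (intro normal.rcos_interchange[OF normal_S]) simp_all
    have "K #>\<^bsub>S\<^esub> ((i \<otimes>\<^bsub>C\<^esub> i') \<otimes>\<^bsub>S\<^esub> (j \<otimes>\<^bsub>C\<^esub> j')) = K #>\<^bsub>S\<^esub> ((i \<otimes>\<^bsub>C\<^esub> i') \<otimes>\<^bsub>C\<^esub> (j \<otimes>\<^bsub>C\<^esub> j'))"
      using C_eq_S[OF ii' jj'] by simp
    also have "\<dots> = K #>\<^bsub>S\<^esub> ((i \<otimes>\<^bsub>C\<^esub> j) \<otimes>\<^bsub>C\<^esub> (i' \<otimes>\<^bsub>C\<^esub> j'))"
      using comm_C[OF i' j] normal.rcos_interchange[OF normal_C, of i' j i j'] by simp
    also have "\<dots> = K #>\<^bsub>S\<^esub> ((i \<otimes>\<^bsub>S\<^esub> j) \<otimes>\<^bsub>C\<^esub> (i' \<otimes>\<^bsub>S\<^esub> j'))"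
      using C_eq_S[OF i j] C_eq_S[OF i' j'] by (intro rcos_mult_cong_C[OF K]) simp_all
    finally show "K #>\<^bsub>S\<^esub> ((i \<otimes>\<^bsub>C\<^esub> i') \<otimes>\<^bsub>S\<^esub> (j \<otimes>\<^bsub>C\<^esub> j')) = K #>\<^bsub>S\<^esub> ((i \<otimes>\<^bsub>S\<^esub> j) \<otimes>\<^bsub>C\<^esub> (i' \<otimes>\<^bsub>S\<^esub> j'))" .
  qed
qed

end

definition huq_generators :: "'a monoid \<Rightarrow> 'a monoid \<Rightarrow> 'a set \<Rightarrow> 'a set \<Rightarrow> 'a set" where
  "huq_generators S C I J =
     {i \<otimes>\<^bsub>C\<^esub> j \<otimes>\<^bsub>C\<^esub> inv\<^bsub>C\<^esub> (j \<otimes>\<^bsub>C\<^esub> i) | i j. i \<in> I \<and> j \<in> J} \<union>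
     {i \<otimes>\<^bsub>S\<^esub> j \<otimes>\<^bsub>S\<^esub> inv\<^bsub>S\<^esub> (j \<otimes>\<^bsub>S\<^esub> i) | i j. i \<in> I \<and> j \<in> J} \<union>
     {(i \<otimes>\<^bsub>C\<^esub> j) \<otimes>\<^bsub>S\<^esub> inv\<^bsub>S\<^esub> (i \<otimes>\<^bsub>S\<^esub> j) | i j. i \<in> I \<and> j \<in> J}"

context left_skew_brace
begin

lemma huq_generators_subset_carrier:
  assumes "I \<subseteq> carrier S" and "J \<subseteq> carrier S"
  shows "huq_generators S C I J \<subseteq> carrier S"
proof -
  have "i \<otimes>\<^bsub>C\<^esub> j \<otimes>\<^bsub>C\<^esub> inv\<^bsub>C\<^esub> (j \<otimes>\<^bsub>C\<^esub> i) \<in> carrier S"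
    and "i \<otimes>\<^bsub>S\<^esub> j \<otimes>\<^bsub>S\<^esub> inv\<^bsub>S\<^esub> (j \<otimes>\<^bsub>S\<^esub> i) \<in> carrier S"
    and "(i \<otimes>\<^bsub>C\<^esub> j) \<otimes>\<^bsub>S\<^esub> inv\<^bsub>S\<^esub> (i \<otimes>\<^bsub>S\<^esub> j) \<in> carrier S"
    if "i \<in> I" and "j \<in> J" for i j
    using subsetD[OF assms(1) that(1)] subsetD[OF assms(2) that(2)] by simp_all
  then show ?thesis
    unfolding huq_generators_def by blast
qed

lemma huq_generators_subset_iff:
  assumes K: "brace_ideal S C K" and I: "I \<subseteq> carrier S" and J: "J \<subseteq> carrier S"
  shows "huq_generators S C I J \<subseteq> K \<longleftrightarrow> (\<forall>i\<in>I. \<forall>j\<in>J.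
      K #>\<^bsub>S\<^esub> (i \<otimes>\<^bsub>C\<^esub> j) = K #>\<^bsub>S\<^esub> (j \<otimes>\<^bsub>C\<^esub> i) \<and>
      K #>\<^bsub>S\<^esub> (i \<otimes>\<^bsub>S\<^esub> j) = K #>\<^bsub>S\<^esub> (j \<otimes>\<^bsub>S\<^esub> i) \<and>
      K #>\<^bsub>S\<^esub> (i \<otimes>\<^bsub>C\<^esub> j) = K #>\<^bsub>S\<^esub> (i \<otimes>\<^bsub>S\<^esub> j))"
proof -
  have generator_mem_iff:
    "i \<otimes>\<^bsub>C\<^esub> j \<otimes>\<^bsub>C\<^esub> inv\<^bsub>C\<^esub> (j \<otimes>\<^bsub>C\<^esub> i) \<in> K \<longleftrightarrow>
      K #>\<^bsub>S\<^esub> (i \<otimes>\<^bsub>C\<^esub> j) = K #>\<^bsub>S\<^esub> (j \<otimes>\<^bsub>C\<^esub> i)"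
    "i \<otimes>\<^bsub>S\<^esub> j \<otimes>\<^bsub>S\<^esub> inv\<^bsub>S\<^esub> (j \<otimes>\<^bsub>S\<^esub> i) \<in> K \<longleftrightarrow>
      K #>\<^bsub>S\<^esub> (i \<otimes>\<^bsub>S\<^esub> j) = K #>\<^bsub>S\<^esub> (j \<otimes>\<^bsub>S\<^esub> i)"
    "(i \<otimes>\<^bsub>C\<^esub> j) \<otimes>\<^bsub>S\<^esub> inv\<^bsub>S\<^esub> (i \<otimes>\<^bsub>S\<^esub> j) \<in> K \<longleftrightarrow>
      K #>\<^bsub>S\<^esub> (i \<otimes>\<^bsub>C\<^esub> j) = K #>\<^bsub>S\<^esub> (i \<otimes>\<^bsub>S\<^esub> j)"
    if "i \<in> I" and "j \<in> J" for i j
    using subsetD[OF I that(1)] subsetD[OF J that(2)]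
    by (simp_all add: rcos_eq_iff_C[OF K, of "i \<otimes>\<^bsub>C\<^esub> j" "j \<otimes>\<^bsub>C\<^esub> i"]
        rcos_eq_iff_S[OF K, of "i \<otimes>\<^bsub>S\<^esub> j" "j \<otimes>\<^bsub>S\<^esub> i"]
        rcos_eq_iff_S[OF K, of "i \<otimes>\<^bsub>C\<^esub> j" "i \<otimes>\<^bsub>S\<^esub> j"])
  have "huq_generators S C I J \<subseteq> K \<longleftrightarrow> (\<forall>i\<in>I. \<forall>j\<in>J.
      i \<otimes>\<^bsub>C\<^esub> j \<otimes>\<^bsub>C\<^esub> inv\<^bsub>C\<^esub> (j \<otimes>\<^bsub>C\<^esub> i) \<in> K \<and>
      i \<otimes>\<^bsub>S\<^esub> j \<otimes>\<^bsub>S\<^esub> inv\<^bsub>S\<^esub> (j \<otimes>\<^bsub>S\<^esub> i) \<in> K \<and>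
      (i \<otimes>\<^bsub>C\<^esub> j) \<otimes>\<^bsub>S\<^esub> inv\<^bsub>S\<^esub> (i \<otimes>\<^bsub>S\<^esub> j) \<in> K)"
    unfolding huq_generators_def by blast
  then show ?thesis
    by (simp add: generator_mem_iff)
qed

lemma huq_condition_iff_generators_subset:
  assumes "brace_ideal S C K" and "subgroup I C" and "subgroup J C"
  shows "huq_condition S C I J K \<longleftrightarrow> huq_generators S C I J \<subseteq> K"
proof -
  have "I \<subseteq> carrier S" and "J \<subseteq> carrier S"
    using subgroup.subset[OF assms(2)] subgroup.subset[OF assms(3)] by simp_all
  note generators_iff = huq_generators_subset_iff[OF assms(1) this]
  show ?thesis
  proof
    assume "huq_condition S C I J K"
    then show "huq_generators S C I J \<subseteq> K"
      unfolding generators_iff using huq_condition_commute[OF assms] by blast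
  next
    assume "huq_generators S C I J \<subseteq> K"
    then show "huq_condition S C I J K"
      unfolding generators_iff by (intro huq_conditionI[OF assms]) blast+
  qed
qed

end

theorem proposition2p5:
  fixes S C :: "'a monoid" and I J :: "'a set"
  assumes "skew_brace S C"
    and "brace_ideal S C I"
    and "brace_ideal S C J"
  shows "huq_commutator S C I J =
    brace_ideal_generated S C
      ({i \<otimes>\<^bsub>C\<^esub> j \<otimes>\<^bsub>C\<^esub> inv\<^bsub>C\<^esub> (j \<otimes>\<^bsub>C\<^esub> i) | i j. i \<in> I \<and> j \<in> J} \<union>
       {i \<otimes>\<^bsub>S\<^esub> j \<otimes>\<^bsub>S\<^esub> inv\<^bsub>S\<^esub> (j \<otimes>\<^bsub>S\<^esub> i) | i j. i \<in> I \<and> j \<in> J} \<union>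
       {(i \<otimes>\<^bsub>C\<^esub> j) \<otimes>\<^bsub>S\<^esub> inv\<^bsub>S\<^esub> (i \<otimes>\<^bsub>S\<^esub> j) | i j. i \<in> I \<and> j \<in> J})"
proof -
  interpret left_skew_brace S C
    using assms(1) by (rule left_skew_braceI)
  have I: "subgroup I C" and J: "subgroup J C"
    using assms(2,3) by (simp_all add: brace_ideal_subgroup_C)
  let ?Y = "huq_generators S C I J"
  have "huq_commutator S C I J = (THE K. brace_ideal S C K \<and> ?Y \<subseteq> K \<and>
      (\<forall>K'. brace_ideal S C K' \<and> ?Y \<subseteq> K' \<longrightarrow> K \<subseteq> K'))"
    unfolding huq_commutator_def
    using huq_condition_iff_generators_subset[OF _ I J] by (intro arg_cong[where f = The] ext) blast
  also have "\<dots> = brace_ideal_generated S C ?Y"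
    using subgroup.subset[OF I] subgroup.subset[OF J]
    by (simp add: the_least_brace_ideal_containing huq_generators_subset_carrier)
  finally show ?thesis
    unfolding huq_generators_def .
qed

end
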